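(* There is a c.e. set $A\subseteq\omega$ such that the density of $A$ exists, yet for every $\Pi^0_1$ subset $B$ of $A$ we have $\underline{\rho}(A\setminus B)>0$, and hence $d(A,B)>0$.
   Context: For $S\subseteq\omega$ and $n>0$, $\rho_n(S)=|S\cap[0,n)|/n$; $\underline{\rho}(S)=\liminf_n\rho_n(S)$, and the density is $\lim_n\rho_n(S)$ when it exists. For $A,B\subseteq\omega$, $d(A,B)=\underline{\rho}(A\triangle B)$. *)

theory Defs
  imports Complex_Main "HOL-Library.Extended_Real"
begin

(* Primitive recursive functions of arity n, as functions on argument lists
   (only their values on lists of length n matter). *)
inductive PR :: "nat \<Rightarrow> (nat list \<Rightarrow> nat) \<Rightarrow> bool" where
  pr_zero: "PR n (\<lambda>_. 0)"
| pr_succ: "PR 1 (\<lambda>xs. Suc (hd xs))"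
| pr_proj: "i < n \<Longrightarrow> PR n (\<lambda>xs. xs ! i)"
| pr_comp: "PR m f \<Longrightarrow> length gs = m \<Longrightarrow> (\<forall>g\<in>set gs. PR n g) \<Longrightarrow>
            PR n (\<lambda>xs. f (map (\<lambda>g. g xs) gs))"
| pr_rec: "PR n g \<Longrightarrow> PR (Suc (Suc n)) h \<Longrightarrow>
           PR (Suc n) (\<lambda>xs. rec_nat (g (tl xs)) (\<lambda>y r. h (y # r # tl xs)) (hd xs))"

(* c.e. = Sigma^0_1: projection of a primitive recursive relation *)
definition ce :: "nat set \<Rightarrow> bool" where
  "ce A \<longleftrightarrow> (\<exists>f. PR 2 f \<and> (\<forall>x. x \<in> A \<longleftrightarrow> (\<exists>y. f [x, y] = 0)))"

definition Pi01 :: "nat set \<Rightarrow> bool" where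
  "Pi01 B \<longleftrightarrow> ce (- B)"

definition rho :: "nat set \<Rightarrow> nat \<Rightarrow> real" where
  "rho S n = real (card (S \<inter> {..<n})) / real n"

definition has_density :: "nat set \<Rightarrow> bool" where
  "has_density S \<longleftrightarrow> (\<exists>L. (\<lambda>n. rho S (Suc n)) \<longlonglongrightarrow> L)"

definition lower_density :: "nat set \<Rightarrow> ereal" where
  "lower_density S = liminf (\<lambda>n. ereal (rho S (Suc n)))"

definition dens_dist :: "nat set \<Rightarrow> nat set \<Rightarrow> ereal" where
  "dens_dist A B = lower_density ((A - B) \<union> (B - A))"

end

(* The c.e. sets are enumerated as W e by a universal predicate kleene_T, obtained from a
   small-step machine for primitive recursive programs whose transition function is itself
   primitive recursive on codes. Split omega into the dyadic slices
   slice e = {z. 2^e divides z + 1 exactly}, of density 1/2^(e+1), and let diag_set contain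
   z in slice e iff every y <= z in slice e belongs to W e. This set is c.e., and on every
   slice it is either everything or finite, which makes its density exist. If B is a Pi^0_1
   subset of diag_set, then -B = W e for some e, and slice e is contained in W e: the least
   element of slice e outside W e would lie in B but not in diag_set. Hence
   slice e is contained in diag_set - B, which therefore has positive lower density. *)

theory Submission
  imports Defs "HOL-Library.Nat_Bijection"
begin

section \<open>Primitive recursive functions\<close>

definition pr_fn :: "nat \<Rightarrow> (nat list \<Rightarrow> nat) \<Rightarrow> bool" where
  "pr_fn n F \<longleftrightarrow> (\<exists>f. PR n f \<and> (\<forall>xs. length xs = n \<longrightarrow> f xs = F xs))"

definition pr_pred :: "nat \<Rightarrow> (nat list \<Rightarrow> bool) \<Rightarrow> bool" where
  "pr_pred n P \<longleftrightarrow> pr_fn n (\<lambda>xs. if P xs then 0 else 1)"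

lemma length_eq_2_iff: "length xs = 2 \<longleftrightarrow> (\<exists>a b. xs = [a, b])"
  by (auto simp: numeral_2_eq_2 length_Suc_conv)

lemma length_eq_3_iff: "length xs = 3 \<longleftrightarrow> (\<exists>a b c. xs = [a, b, c])"
  by (auto simp: numeral_3_eq_3 length_Suc_conv)

lemma map_nth_upt_drop: "length xs = m \<Longrightarrow> map ((!) xs) [k..<m] = drop k xs"
  by (rule nth_equalityI) auto

lemma pr_fn_cong:
  assumes "pr_fn n F" "\<And>xs. length xs = n \<Longrightarrow> F xs = G xs"
  shows "pr_fn n G"
  using assms unfolding pr_fn_def by metis

lemma pr_fn_zero: "pr_fn n (\<lambda>_. 0)"
  unfolding pr_fn_def by (blast intro: PR.intros)

lemma pr_fn_proj: "i < n \<Longrightarrow> pr_fn n (\<lambda>xs. xs ! i)"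
  unfolding pr_fn_def by (blast intro: PR.intros)

lemma pr_fn_succ: "pr_fn 1 (\<lambda>xs. Suc (xs ! 0))"
  unfolding pr_fn_def using PR.pr_succ by (auto simp: length_Suc_conv intro!: exI[of _ "\<lambda>xs. Suc (hd xs)"])

lemma pr_fn_comp:
  assumes F: "pr_fn m F" and len: "length Gs = m" and G: "\<forall>G\<in>set Gs. pr_fn n G"
  shows "pr_fn n (\<lambda>xs. F (map (\<lambda>G. G xs) Gs))"
proof -
  obtain f where f: "PR m f" "\<And>xs. length xs = m \<Longrightarrow> f xs = F xs"
    using F unfolding pr_fn_def by blast
  obtain c where c: "\<And>G. G \<in> set Gs \<Longrightarrow> PR n (c G) \<and> (\<forall>xs. length xs = n \<longrightarrow> c G xs = G xs)"
    using G unfolding pr_fn_def by metis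
  have "PR n (\<lambda>xs. f (map (\<lambda>g. g xs) (map c Gs)))"
    by (rule PR.pr_comp[OF f(1)]) (use c len in auto)
  moreover have "f (map (\<lambda>g. g xs) (map c Gs)) = F (map (\<lambda>G. G xs) Gs)" if "length xs = n" for xs
    using c len that by (auto simp: f(2) intro!: arg_cong[where f=F])
  ultimately show ?thesis unfolding pr_fn_def by blast
qed

lemma pr_fn_rec:
  assumes G: "pr_fn n G" and H: "pr_fn (Suc (Suc n)) H"
  shows "pr_fn (Suc n) (\<lambda>xs. rec_nat (G (tl xs)) (\<lambda>y r. H (y # r # tl xs)) (hd xs))"
proof -
  obtain g where g: "PR n g" "\<And>xs. length xs = n \<Longrightarrow> g xs = G xs"
    using G unfolding pr_fn_def by blast
  obtain h where h: "PR (Suc (Suc n)) h" "\<And>xs. length xs = Suc (Suc n) \<Longrightarrow> h xs = H xs"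
    using H unfolding pr_fn_def by blast
  have "rec_nat (g (tl xs)) (\<lambda>y r. h (y # r # tl xs)) k = rec_nat (G (tl xs)) (\<lambda>y r. H (y # r # tl xs)) k"
    if "length xs = Suc n" for xs k
    using that by (induction k) (auto simp: g(2) h(2))
  then show ?thesis unfolding pr_fn_def
    by (intro exI[of _ "\<lambda>xs. rec_nat (g (tl xs)) (\<lambda>y r. h (y # r # tl xs)) (hd xs)"])
       (auto intro: PR.pr_rec g h)
qed

lemma pr_fn_comp1:
  assumes "pr_fn 1 (\<lambda>ys. f (ys ! 0))" "pr_fn n A"
  shows "pr_fn n (\<lambda>xs. f (A xs))"
  using pr_fn_comp[OF assms(1), of "[A]"] assms(2) by simp

lemma pr_fn_comp2:
  assumes "pr_fn 2 (\<lambda>ys. f (ys ! 0) (ys ! 1))" "pr_fn n A" "pr_fn n B"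
  shows "pr_fn n (\<lambda>xs. f (A xs) (B xs))"
  using pr_fn_comp[OF assms(1), of "[A, B]"] assms(2,3) by simp

lemma pr_fn_comp3:
  assumes "pr_fn 3 (\<lambda>ys. f (ys ! 0) (ys ! 1) (ys ! 2))" "pr_fn n A" "pr_fn n B" "pr_fn n C"
  shows "pr_fn n (\<lambda>xs. f (A xs) (B xs) (C xs))"
  using pr_fn_comp[OF assms(1), of "[A, B, C]"] assms(2-4) by simp

lemma pr_fn_Suc: "pr_fn n A \<Longrightarrow> pr_fn n (\<lambda>xs. Suc (A xs))"
  by (rule pr_fn_comp1[OF pr_fn_succ])

lemma pr_fn_const: "pr_fn n (\<lambda>_. c)"
  by (induction c) (auto intro: pr_fn_zero pr_fn_Suc)

text \<open>A case distinction on zero is a primitive recursion whose step ignores the recursive value.\<close>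
lemma pr_fn_if_zero:
  assumes "pr_fn n A" "pr_fn n B" "pr_fn n C"
  shows "pr_fn n (\<lambda>xs. if A xs = 0 then B xs else C xs)"
proof -
  have "pr_fn (Suc 2) (\<lambda>xs. rec_nat ((\<lambda>zs. zs ! 0) (tl xs)) (\<lambda>y r. (\<lambda>zs. zs ! 3) (y # r # tl xs)) (hd xs))"
    by (rule pr_fn_rec) (auto intro: pr_fn_proj)
  then have "pr_fn 3 (\<lambda>xs. rec_nat (tl xs ! 0) (\<lambda>y r. (y # r # tl xs) ! 3) (hd xs))"
    by (simp add: numeral_3_eq_3)
  then have "pr_fn 3 (\<lambda>ys. if ys ! 0 = 0 then ys ! 1 else ys ! 2)"
    by (rule pr_fn_cong) (auto simp: length_eq_3_iff gr0_conv_Suc)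
  then show ?thesis using assms by (rule pr_fn_comp3)
qed

lemma pr_fn_rec_param:
  assumes G: "pr_fn n G" and H: "pr_fn (Suc (Suc n)) (\<lambda>zs. H (zs ! 0) (zs ! 1) (drop 2 zs))"
    and K: "pr_fn n K"
  shows "pr_fn n (\<lambda>xs. rec_nat (G xs) (\<lambda>y r. H y r xs) (K xs))"
proof -
  have R: "pr_fn (Suc n) (\<lambda>xs. rec_nat (G (tl xs)) (\<lambda>y r. H y r (tl xs)) (hd xs))"
    using pr_fn_rec[OF G H] by simp
  have "pr_fn n (\<lambda>xs. (\<lambda>xs. rec_nat (G (tl xs)) (\<lambda>y r. H y r (tl xs)) (hd xs))
           (map (\<lambda>G. G xs) (K # map (\<lambda>i xs. xs ! i) [0..<n])))"
    by (rule pr_fn_comp[OF R]) (auto intro: K pr_fn_proj)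
  then show ?thesis
    by (rule pr_fn_cong) (simp add: map_nth_upt_drop o_def)
qed

lemma pr_fn_drop2:
  assumes "pr_fn n B"
  shows "pr_fn (Suc (Suc n)) (\<lambda>zs. B (drop 2 zs))"
proof -
  have "pr_fn (Suc (Suc n)) (\<lambda>zs. B (map (\<lambda>G. G zs) (map (\<lambda>i xs. xs ! i) [2..<Suc (Suc n)])))"
    by (rule pr_fn_comp[OF assms]) (auto intro!: pr_fn_proj)
  then show ?thesis
    by (rule pr_fn_cong) (simp add: o_def map_nth_upt_drop del: upt_Suc)
qed

lemma pr_fn_omit_arg1:
  assumes "pr_fn (Suc n) F"
  shows "pr_fn (Suc (Suc n)) (\<lambda>zs. F (zs ! 0 # drop 2 zs))"
proof -
  have "pr_fn (Suc (Suc n)) (\<lambda>zs. F (map (\<lambda>G. G zs) (map (\<lambda>i xs. xs ! i) (0 # [2..<Suc (Suc n)]))))"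
    by (rule pr_fn_comp[OF assms]) (auto intro!: pr_fn_proj)
  then show ?thesis
    by (rule pr_fn_cong) (simp add: o_def map_nth_upt_drop del: upt_Suc)
qed

lemma pr_fn_add: "pr_fn n A \<Longrightarrow> pr_fn n B \<Longrightarrow> pr_fn n (\<lambda>xs. A xs + B xs)"
proof -
  assume "pr_fn n A" "pr_fn n B"
  then have "pr_fn n (\<lambda>xs. rec_nat (B xs) (\<lambda>y r. Suc r) (A xs))"
    by (intro pr_fn_rec_param) (auto intro!: pr_fn_Suc pr_fn_proj)
  moreover have "rec_nat b (\<lambda>y r. Suc r) a = a + b" for a b :: nat
    by (induction a) auto
  ultimately show ?thesis by simp
qed

lemma pr_fn_pred: "pr_fn n A \<Longrightarrow> pr_fn n (\<lambda>xs. A xs - 1)"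
proof -
  assume "pr_fn n A"
  then have "pr_fn n (\<lambda>xs. rec_nat 0 (\<lambda>y r. y) (A xs))"
    by (intro pr_fn_rec_param pr_fn_zero) (auto intro: pr_fn_proj)
  moreover have "rec_nat 0 (\<lambda>y r. y) a = a - 1" for a :: nat
    by (cases a) auto
  ultimately show ?thesis by simp
qed

lemma pr_fn_diff: "pr_fn n A \<Longrightarrow> pr_fn n B \<Longrightarrow> pr_fn n (\<lambda>xs. A xs - B xs)"
proof -
  assume A: "pr_fn n A" and B: "pr_fn n B"
  have "pr_fn n (\<lambda>xs. rec_nat (A xs) (\<lambda>y r. r - 1) (B xs))"
    by (rule pr_fn_rec_param[OF A _ B]) (rule pr_fn_pred, rule pr_fn_proj, simp)
  moreover have "rec_nat a (\<lambda>y r. r - 1) b = a - b" for a b :: nat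
    by (induction b) auto
  ultimately show ?thesis by simp
qed

lemma pr_fn_mult: "pr_fn n A \<Longrightarrow> pr_fn n B \<Longrightarrow> pr_fn n (\<lambda>xs. A xs * B xs)"
proof -
  assume "pr_fn n A" "pr_fn n B"
  then have "pr_fn n (\<lambda>xs. rec_nat 0 (\<lambda>y r. r + B xs) (A xs))"
    by (intro pr_fn_rec_param pr_fn_zero) (auto intro!: pr_fn_add pr_fn_proj pr_fn_drop2)
  moreover have "rec_nat 0 (\<lambda>y r. r + b) a = a * b" for a b :: nat
    by (induction a) auto
  ultimately show ?thesis by simp
qed

lemma pr_fn_power2: "pr_fn n A \<Longrightarrow> pr_fn n (\<lambda>xs. 2 ^ A xs)"
proof -
  assume "pr_fn n A"
  then have "pr_fn n (\<lambda>xs. rec_nat 1 (\<lambda>y r. r + r) (A xs))"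
    by (intro pr_fn_rec_param pr_fn_const) (auto intro!: pr_fn_add pr_fn_proj)
  moreover have "rec_nat 1 (\<lambda>y r. r + r) k = (2::nat) ^ k" for k
    by (induction k) auto
  ultimately show ?thesis by simp
qed

lemma pr_fn_triangle: "pr_fn n A \<Longrightarrow> pr_fn n (\<lambda>xs. triangle (A xs))"
proof -
  assume "pr_fn n A"
  then have "pr_fn n (\<lambda>xs. rec_nat 0 (\<lambda>y r. r + Suc y) (A xs))"
    by (intro pr_fn_rec_param pr_fn_zero) (auto intro!: pr_fn_add pr_fn_Suc pr_fn_proj)
  moreover have "rec_nat 0 (\<lambda>y r. r + Suc y) k = triangle k" for k
    by (induction k) auto
  ultimately show ?thesis by simp
qed

lemma pr_fn_bounded_sum:
  assumes "pr_fn (Suc n) G" "\<And>y xs. length xs = n \<Longrightarrow> G (y # xs) = F y xs" "pr_fn n K"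
  shows "pr_fn n (\<lambda>xs. \<Sum>y<K xs. F y xs)"
proof -
  have "pr_fn (Suc (Suc n)) (\<lambda>zs. F (zs ! 0) (drop 2 zs))"
    using pr_fn_omit_arg1[OF assms(1)] by (rule pr_fn_cong) (auto simp: assms(2))
  then have "pr_fn n (\<lambda>xs. rec_nat 0 (\<lambda>y r. r + F y xs) (K xs))"
    by (intro pr_fn_rec_param pr_fn_zero assms(3)) (auto intro!: pr_fn_add pr_fn_proj)
  moreover have "rec_nat 0 (\<lambda>y r. r + F y xs) k = (\<Sum>y<k. F y xs)" for k xs
    by (induction k) auto
  ultimately show ?thesis by simp
qed

lemma pr_fn_if:
  "pr_pred n P \<Longrightarrow> pr_fn n B \<Longrightarrow> pr_fn n C \<Longrightarrow> pr_fn n (\<lambda>xs. if P xs then B xs else C xs)"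
  unfolding pr_pred_def by (drule (2) pr_fn_if_zero) (erule pr_fn_cong, simp)

lemma pr_pred_comp2:
  "pr_pred 2 (\<lambda>ys. P (ys ! 0) (ys ! 1)) \<Longrightarrow> pr_fn n A \<Longrightarrow> pr_fn n B \<Longrightarrow>
   pr_pred n (\<lambda>xs. P (A xs) (B xs))"
  unfolding pr_pred_def by (rule pr_fn_comp2)

lemma pr_pred_eq: "pr_fn n A \<Longrightarrow> pr_fn n B \<Longrightarrow> pr_pred n (\<lambda>xs. A xs = B xs)"
  unfolding pr_pred_def
  by (rule pr_fn_cong[OF pr_fn_if_zero[OF pr_fn_add[OF pr_fn_diff pr_fn_diff] pr_fn_const pr_fn_const,
        of n A B B A 0 1]]) auto

lemma pr_pred_not: "pr_pred n P \<Longrightarrow> pr_pred n (\<lambda>xs. \<not> P xs)"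
  unfolding pr_pred_def
  by (rule pr_fn_cong[OF pr_fn_if_zero[OF _ pr_fn_const pr_fn_const, of n "\<lambda>xs. if P xs then 0 else 1" 1 0]]) auto

lemma pr_pred_conj: "pr_pred n P \<Longrightarrow> pr_pred n Q \<Longrightarrow> pr_pred n (\<lambda>xs. P xs \<and> Q xs)"
  unfolding pr_pred_def
  by (rule pr_fn_cong[OF pr_fn_if_zero[OF _ _ pr_fn_const,
        of n "\<lambda>xs. if P xs then 0 else 1" "\<lambda>xs. if Q xs then 0 else 1" 1]]) auto

lemma pr_pred_imp: "pr_pred n P \<Longrightarrow> pr_pred n Q \<Longrightarrow> pr_pred n (\<lambda>xs. P xs \<longrightarrow> Q xs)"
  using pr_pred_not[OF pr_pred_conj[OF _ pr_pred_not]] by simp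

lemma pr_pred_bex:
  assumes "pr_pred (Suc n) Q" "\<And>y xs. length xs = n \<Longrightarrow> Q (y # xs) = P y xs" "pr_fn n K"
  shows "pr_pred n (\<lambda>xs. \<exists>y<K xs. P y xs)"
proof -
  have "pr_pred (Suc (Suc n)) (\<lambda>zs. P (zs ! 0) (drop 2 zs))"
    using pr_fn_omit_arg1[OF assms(1)[unfolded pr_pred_def]] unfolding pr_pred_def
    by (rule pr_fn_cong) (auto simp: assms(2))
  then have "pr_fn n (\<lambda>xs. rec_nat 1 (\<lambda>y r. if P y xs then 0 else r) (K xs))"
    by (intro pr_fn_rec_param pr_fn_const assms(3) pr_fn_if) (auto intro: pr_fn_proj)
  moreover have "rec_nat 1 (\<lambda>y r. if P y xs then 0 else r) k = (if \<exists>y<k. P y xs then 0 else 1)" for k xs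
    by (induction k) (auto simp: less_Suc_eq)
  ultimately show ?thesis unfolding pr_pred_def by (rule pr_fn_cong)
qed

lemma pr_pred_ball:
  assumes "pr_pred (Suc n) Q" "\<And>y xs. length xs = n \<Longrightarrow> Q (y # xs) = P y xs" "pr_fn n K"
  shows "pr_pred n (\<lambda>xs. \<forall>y<K xs. P y xs)"
  using pr_pred_not[OF pr_pred_bex[OF pr_pred_not[OF assms(1)] _ assms(3)], of "\<lambda>y xs. \<not> P y xs"]
  by (simp add: assms(2))

section \<open>A universal c.e. predicate\<close>

datatype prog = Zero | Succ | Proj nat | Comp prog "prog list" | Rec prog prog

fun hd0 :: "nat list \<Rightarrow> nat" where
  "hd0 [] = 0" | "hd0 (x # xs) = x"

definition nth0 :: "nat list \<Rightarrow> nat \<Rightarrow> nat" where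
  "nth0 xs i = hd0 (drop i xs)"

fun run :: "prog \<Rightarrow> nat list \<Rightarrow> nat" where
  "run Zero xs = 0"
| "run Succ xs = Suc (hd0 xs)"
| "run (Proj i) xs = nth0 xs i"
| "run (Comp f gs) xs = run f (map (\<lambda>g. run g xs) gs)"
| "run (Rec g h) xs = rec_nat (run g (tl xs)) (\<lambda>y r. run h (y # r # tl xs)) (hd0 xs)"

lemma hd0_hd: "xs \<noteq> [] \<Longrightarrow> hd0 xs = hd xs"
  by (cases xs) auto

lemma nth0_nth: "i < length xs \<Longrightarrow> nth0 xs i = xs ! i"
  unfolding nth0_def by (simp add: hd_drop_conv_nth hd0_hd)

lemma PR_has_prog: "PR n f \<Longrightarrow> \<exists>p. \<forall>xs. length xs = n \<longrightarrow> run p xs = f xs"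
proof (induction rule: PR.induct)
  case (pr_zero n)
  then show ?case by (intro exI[of _ Zero]) auto
next
  case pr_succ
  then show ?case by (intro exI[of _ Succ]) (auto simp: length_Suc_conv)
next
  case (pr_proj i n)
  then show ?case by (intro exI[of _ "Proj i"]) (auto simp: nth0_nth)
next
  case (pr_comp m f gs n)
  obtain pf where pf: "\<And>xs. length xs = m \<Longrightarrow> run pf xs = f xs" using pr_comp by blast
  have "\<forall>g\<in>set gs. \<exists>p. \<forall>xs. length xs = n \<longrightarrow> run p xs = g xs" using pr_comp by blast
  then obtain c where c: "\<And>g xs. g\<in>set gs \<Longrightarrow> length xs = n \<Longrightarrow> run (c g) xs = g xs" by metis
  show ?case
    by (intro exI[of _ "Comp pf (map c gs)"]) (auto simp: o_def c pf pr_comp(2) intro!: arg_cong[where f=f] cong: map_cong)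
next
  case (pr_rec n g h)
  obtain pg where pg: "\<And>xs. length xs = n \<Longrightarrow> run pg xs = g xs" using pr_rec by blast
  obtain ph where ph: "\<And>xs. length xs = Suc (Suc n) \<Longrightarrow> run ph xs = h xs" using pr_rec by blast
  have "rec_nat (run pg (tl xs)) (\<lambda>y r. run ph (y # r # tl xs)) k = rec_nat (g (tl xs)) (\<lambda>y r. h (y # r # tl xs)) k"
    if "length xs = Suc n" for xs k
    using that by (induction k) (auto simp: pg ph)
  then show ?case
    by (intro exI[of _ "Rec pg ph"]) (auto simp: length_Suc_conv)
qed

text \<open>A configuration is a stack of frames together with a program call or a returned value.
  CompFrame f rest xs acc: the arguments rest of a composition with f are still to be evaluated
  on xs (right to left), acc holds the values obtained so far. RecFrame h m ys: the returned
  value r is to be fed to h as h (m # r # ys).\<close>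
datatype frame = CompFrame prog "prog list" "nat list" "nat list" | RecFrame prog nat "nat list"
datatype mode = Call prog "nat list" | Ret nat

fun step :: "frame list \<times> mode \<Rightarrow> frame list \<times> mode" where
  "step (K, Call Zero xs) = (K, Ret 0)"
| "step (K, Call Succ xs) = (K, Ret (Suc (hd0 xs)))"
| "step (K, Call (Proj i) xs) = (K, Ret (nth0 xs i))"
| "step (K, Call (Comp f gs) xs) = (case rev gs of [] \<Rightarrow> (K, Call f []) | g # rest \<Rightarrow> (CompFrame f rest xs [] # K, Call g xs))"
| "step (K, Call (Rec g h) xs) = (case hd0 xs of 0 \<Rightarrow> (K, Call g (tl xs))
      | Suc m \<Rightarrow> (RecFrame h m (tl xs) # K, Call (Rec g h) (m # tl xs)))"
| "step (CompFrame f rest xs acc # K, Ret v) = (case rest of [] \<Rightarrow> (K, Call f (v # acc))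
      | g # rest' \<Rightarrow> (CompFrame f rest' xs (v # acc) # K, Call g xs))"
| "step (RecFrame h m ys # K, Ret v) = (K, Call h (m # v # ys))"
| "step ([], Ret v) = ([], Ret v)"

definition reaches :: "frame list \<times> mode \<Rightarrow> frame list \<times> mode \<Rightarrow> bool" where
  "reaches c d \<longleftrightarrow> (\<exists>k. (step ^^ k) c = d)"

lemma reaches_refl: "reaches c c"
  unfolding reaches_def by (metis funpow_0)

lemma reaches_step: "reaches (step c) d \<Longrightarrow> reaches c d"
  unfolding reaches_def by (metis funpow_Suc_right o_apply)

lemma reaches_trans: "reaches c d \<Longrightarrow> reaches d e \<Longrightarrow> reaches c e"
  unfolding reaches_def by (metis funpow_add o_apply)

lemma reaches_comp_args:
  assumes IH: "\<And>g K. g \<in> set rest \<Longrightarrow> reaches (K, Call g xs) (K, Ret (run g xs))"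
  shows "reaches (CompFrame f rest xs acc # K, Ret v) (K, Call f (rev (map (\<lambda>g. run g xs) rest) @ v # acc))"
  using IH
proof (induction rest arbitrary: acc v)
  case Nil
  show ?case by (rule reaches_step) (simp add: reaches_refl)
next
  case (Cons g rest)
  have "reaches (CompFrame f rest xs (v # acc) # K, Call g xs) (CompFrame f rest xs (v # acc) # K, Ret (run g xs))"
    using Cons.prems by auto
  moreover have "reaches (CompFrame f rest xs (v # acc) # K, Ret (run g xs))
      (K, Call f (rev (map (\<lambda>g. run g xs) rest) @ run g xs # v # acc))"
    using Cons by auto
  ultimately have "reaches (CompFrame f rest xs (v # acc) # K, Call g xs)
      (K, Call f (rev (map (\<lambda>g. run g xs) rest) @ run g xs # v # acc))" by (rule reaches_trans)
  then show ?case by (rule_tac reaches_step) simp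
qed

lemma reaches_Comp:
  assumes f: "\<And>K xs. reaches (K, Call f xs) (K, Ret (run f xs))"
    and gs: "\<And>g K xs. g \<in> set gs \<Longrightarrow> reaches (K, Call g xs) (K, Ret (run g xs))"
  shows "reaches (K, Call (Comp f gs) xs) (K, Ret (run (Comp f gs) xs))"
proof (cases "rev gs")
  case Nil
  then have "gs = []" by simp
  then show ?thesis using f[of K "[]"] by (rule_tac reaches_step) simp
next
  case (Cons g rest)
  have gs_eq: "gs = rev rest @ [g]" using Cons by (metis rev_rev_ident rev.simps(2))
  have "reaches (CompFrame f rest xs [] # K, Call g xs) (CompFrame f rest xs [] # K, Ret (run g xs))"
    using gs gs_eq by auto
  moreover have "reaches (CompFrame f rest xs [] # K, Ret (run g xs))
      (K, Call f (rev (map (\<lambda>g. run g xs) rest) @ [run g xs]))"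
    by (rule reaches_comp_args) (use gs gs_eq in auto)
  moreover have "reaches (K, Call f (rev (map (\<lambda>g. run g xs) rest) @ [run g xs])) (K, Ret (run (Comp f gs) xs))"
    using f by (simp add: gs_eq rev_map)
  ultimately have "reaches (CompFrame f rest xs [] # K, Call g xs) (K, Ret (run (Comp f gs) xs))"
    by (blast intro: reaches_trans)
  then show ?thesis using Cons by (rule_tac reaches_step) simp
qed

lemma reaches_Rec:
  assumes g: "\<And>K xs. reaches (K, Call g xs) (K, Ret (run g xs))"
    and h: "\<And>K xs. reaches (K, Call h xs) (K, Ret (run h xs))"
  shows "reaches (K, Call (Rec g h) xs) (K, Ret (run (Rec g h) xs))"
proof -
  have "reaches (K, Call (Rec g h) (n # ys)) (K, Ret (run (Rec g h) (n # ys)))" for n ys K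
  proof (induction n arbitrary: K)
    case 0
    show ?case using g by (rule_tac reaches_step) simp
  next
    case (Suc m)
    have "reaches (RecFrame h m ys # K, Call (Rec g h) (m # ys)) (RecFrame h m ys # K, Ret (run (Rec g h) (m # ys)))"
      using Suc by blast
    moreover have "reaches (RecFrame h m ys # K, Ret (run (Rec g h) (m # ys))) (K, Ret (run (Rec g h) (Suc m # ys)))"
      by (rule reaches_step) (use h in simp)
    ultimately have "reaches (RecFrame h m ys # K, Call (Rec g h) (m # ys)) (K, Ret (run (Rec g h) (Suc m # ys)))"
      by (rule reaches_trans)
    then show ?case by (rule_tac reaches_step) simp
  qed
  moreover have "reaches (K, Call (Rec g h) []) (K, Ret (run (Rec g h) []))"
    using g by (rule_tac reaches_step) simp
  ultimately show ?thesis by (cases xs) auto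
qed

lemma machine_computes_run: "reaches (K, Call p xs) (K, Ret (run p xs))"
proof (induction p arbitrary: xs K)
  case (Comp f gs)
  then show ?case by (intro reaches_Comp) auto
next
  case (Rec g h)
  then show ?case by (intro reaches_Rec) auto
qed (rule reaches_step, simp add: reaches_refl)+

definition npair :: "nat \<Rightarrow> nat \<Rightarrow> nat" where "npair a b = prod_encode (a, b)"
definition nfst :: "nat \<Rightarrow> nat" where "nfst z = fst (prod_decode z)"
definition nsnd :: "nat \<Rightarrow> nat" where "nsnd z = snd (prod_decode z)"

lemma nfst_npair[simp]: "nfst (npair a b) = a" and nsnd_npair[simp]: "nsnd (npair a b) = b"
  by (simp_all add: nfst_def nsnd_def npair_def)

lemma npair_eq[simp]: "npair a b = npair c d \<longleftrightarrow> a = c \<and> b = d"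
  by (simp add: npair_def)

lemma prod_decode_0_eq: "prod_decode 0 = (0, 0)"
  by (simp add: prod_decode_def prod_decode_aux.simps)

lemma nfst_0[simp]: "nfst 0 = 0" and nsnd_0[simp]: "nsnd 0 = 0"
  by (simp_all add: nfst_def nsnd_def prod_decode_0_eq)

definition ncons :: "nat \<Rightarrow> nat \<Rightarrow> nat" where "ncons a l = Suc (npair a l)"
definition nhd :: "nat \<Rightarrow> nat" where "nhd l = nfst (l - 1)"
definition ntl :: "nat \<Rightarrow> nat" where "ntl l = nsnd (l - 1)"

lemma nhd_ncons[simp]: "nhd (ncons a l) = a" and ntl_ncons[simp]: "ntl (ncons a l) = l"
  and ncons_ne[simp]: "ncons a l \<noteq> 0" and nhd_0[simp]: "nhd 0 = 0" and ntl_0[simp]: "ntl 0 = 0"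
  by (simp_all add: ncons_def nhd_def ntl_def)

fun nlist :: "nat list \<Rightarrow> nat" where
  "nlist [] = 0" | "nlist (x # xs) = ncons x (nlist xs)"

definition nnth :: "nat \<Rightarrow> nat \<Rightarrow> nat" where "nnth l i = nhd ((ntl ^^ i) l)"

lemma funpow_ntl_nlist: "(ntl ^^ i) (nlist xs) = nlist (drop i xs)"
proof (induction i arbitrary: xs)
  case 0 then show ?case by simp
next
  case (Suc i)
  show ?case
  proof (cases xs)
    case Nil
    have "(ntl ^^ j) 0 = 0" for j by (induction j) auto
    then show ?thesis using Nil by simp
  next
    case (Cons a ys) then show ?thesis using Suc by (simp add: funpow_Suc_right del: funpow.simps)
  qed
qed

lemma nhd_nlist: "nhd (nlist xs) = hd0 xs"
  by (cases xs) auto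

lemma nnth_nlist[simp]: "nnth (nlist xs) i = nth0 xs i"
  by (simp add: nnth_def nth0_def funpow_ntl_nlist nhd_nlist)

fun prog_code :: "prog \<Rightarrow> nat" where
  "prog_code Zero = npair 0 0"
| "prog_code Succ = npair 1 0"
| "prog_code (Proj i) = npair 2 i"
| "prog_code (Comp f gs) = npair 3 (npair (prog_code f) (nlist (map prog_code (rev gs))))"
| "prog_code (Rec g h) = npair 4 (npair (prog_code g) (prog_code h))"

fun frame_code :: "frame \<Rightarrow> nat" where
  "frame_code (CompFrame f rest xs acc) = npair 0 (npair (prog_code f) (npair (nlist (map prog_code rest)) (npair (nlist xs) (nlist acc))))"
| "frame_code (RecFrame h m ys) = npair 1 (npair (prog_code h) (npair m (nlist ys)))"

fun mode_code :: "mode \<Rightarrow> nat" where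
  "mode_code (Call t xs) = npair 0 (npair (prog_code t) (nlist xs))"
| "mode_code (Ret v) = npair 1 v"

fun config_code :: "frame list \<times> mode \<Rightarrow> nat" where
  "config_code (K, M) = npair (nlist (map frame_code K)) (mode_code M)"

text \<open>The transition function on codes (step_code_correct); it is written using only pairing,
  projections and arithmetic so that it is visibly primitive recursive.\<close>
definition step_code :: "nat \<Rightarrow> nat" where
  "step_code z = (let K = nfst z; M = nsnd z in
    if nfst M = 0 then
      (let T = nfst (nsnd M); XS = nsnd (nsnd M); tag = nfst T; arg = nsnd T in
       if tag = 0 then npair K (npair 1 0)
       else if tag = 1 then npair K (npair 1 (Suc (nhd XS)))
       else if tag = 2 then npair K (npair 1 (nnth XS arg))
       else if tag = 3 then
         (if nsnd arg = 0 then npair K (npair 0 (npair (nfst arg) 0))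
          else npair (ncons (npair 0 (npair (nfst arg) (npair (ntl (nsnd arg)) (npair XS 0)))) K) (npair 0 (npair (nhd (nsnd arg)) XS)))
       else
         (if nhd XS = 0 then npair K (npair 0 (npair (nfst arg) (ntl XS)))
          else npair (ncons (npair 1 (npair (nsnd arg) (npair (nhd XS - 1) (ntl XS)))) K)
                  (npair 0 (npair T (ncons (nhd XS - 1) (ntl XS))))))
    else
      (let v = nsnd M in
       if K = 0 then z
       else (let FR = nhd K; K' = ntl K; fa = nsnd FR in
         if nfst FR = 0 then
           (if nfst (nsnd fa) = 0 then npair K' (npair 0 (npair (nfst fa) (ncons v (nsnd (nsnd (nsnd fa))))))
            else npair (ncons (npair 0 (npair (nfst fa) (npair (ntl (nfst (nsnd fa))) (npair (nfst (nsnd (nsnd fa))) (ncons v (nsnd (nsnd (nsnd fa)))))))) K')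
                    (npair 0 (npair (nhd (nfst (nsnd fa))) (nfst (nsnd (nsnd fa))))))
         else npair K' (npair 0 (npair (nfst fa) (ncons (nfst (nsnd fa)) (ncons v (nsnd (nsnd fa)))))))))"

lemma nlist_eq_0_iff: "nlist xs = 0 \<longleftrightarrow> xs = []"
  by (cases xs) auto

lemma step_code_correct: "step_code (config_code c) = config_code (step c)"
proof (cases c rule: step.cases)
  case (4 K f gs xs)
  then show ?thesis
    by (cases "rev gs") (simp_all add: step_code_def Let_def)
next
  case (5 K g h xs)
  then show ?thesis
    by (cases xs) (simp_all add: step_code_def Let_def split: nat.splits)
next
  case (6 f rest xs acc K v)
  then show ?thesis
    by (cases rest) (simp_all add: step_code_def Let_def)
qed (simp_all add: step_code_def Let_def nhd_nlist)

lemma funpow_step_code: "(step_code ^^ k) (config_code c) = config_code ((step ^^ k) c)"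
  by (induction k) (auto simp: step_code_correct)

lemma funpow_step_halted: "(step ^^ k) ([], Ret v) = ([], Ret v)"
  by (induction k) auto

lemma run_eq_iff_halts: "run p xs = v \<longleftrightarrow> (\<exists>s. (step ^^ s) ([], Call p xs) = ([], Ret v))"
proof -
  obtain k where k: "(step ^^ k) ([], Call p xs) = ([], Ret (run p xs))"
    using machine_computes_run[of "[]" p xs] unfolding reaches_def by blast
  have "v = run p xs" if "(step ^^ s) ([], Call p xs) = ([], Ret v)" for s
  proof -
    have "(step ^^ (s + k)) ([], Call p xs) = ([], Ret (run p xs))"
      by (simp add: funpow_add k funpow_step_halted)
    moreover have "(step ^^ (k + s)) ([], Call p xs) = ([], Ret v)"
      by (simp add: funpow_add that funpow_step_halted)
    ultimately show ?thesis by (simp add: add.commute)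
  qed
  then show ?thesis using k by blast
qed

text \<open>kleene_T e x y = 0 says that the program with code e, run on the arguments [x, nfst y],
  halts with output 0 within nsnd y machine steps.\<close>
definition kleene_T :: "nat \<Rightarrow> nat \<Rightarrow> nat \<Rightarrow> nat" where
  "kleene_T e x y = (if (step_code ^^ nsnd y) (npair 0 (npair 0 (npair e (ncons x (ncons (nfst y) 0)))))
                    = npair 0 (npair 1 0) then 0 else 1)"

definition W :: "nat \<Rightarrow> nat set" where
  "W e = {x. \<exists>y. kleene_T e x y = 0}"

lemma kleene_T_prog_code_iff: "kleene_T (prog_code p) x y = 0 \<longleftrightarrow> (step ^^ nsnd y) ([], Call p [x, nfst y]) = ([], Ret 0)"
proof -
  have init: "npair 0 (npair 0 (npair (prog_code p) (ncons x (ncons w 0)))) = config_code ([], Call p [x, w])" for w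
    by simp
  have "config_code c = npair 0 (npair 1 0) \<longleftrightarrow> c = ([], Ret 0)" for c
    by (cases c rule: config_code.cases, rename_tac K M, case_tac M) (auto simp: nlist_eq_0_iff)
  then show ?thesis
    unfolding kleene_T_def init funpow_step_code by simp
qed

lemma ex_nat_pair_iff: "(\<exists>w s. Q w s) \<longleftrightarrow> (\<exists>y. Q (nfst y) (nsnd y))"
  by (metis nfst_npair nsnd_npair)

lemma ce_obtain_index:
  assumes "ce X"
  obtains e where "X = W e"
proof -
  obtain f where f: "PR 2 f" "\<And>x. x \<in> X \<longleftrightarrow> (\<exists>y. f [x, y] = 0)"
    using assms unfolding ce_def by blast
  obtain p where p: "\<And>xs. length xs = 2 \<Longrightarrow> run p xs = f xs"
    using PR_has_prog[OF f(1)] by blast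
  have "(\<exists>w. f [x, w] = 0) \<longleftrightarrow> (\<exists>y. kleene_T (prog_code p) x y = 0)" for x
  proof -
    have "f [x, w] = 0 \<longleftrightarrow> (\<exists>s. (step ^^ s) ([], Call p [x, w]) = ([], Ret 0))" for w
      using p[of "[x, w]"] run_eq_iff_halts[of p "[x, w]" 0] by simp
    then show ?thesis
      using ex_nat_pair_iff[where Q = "\<lambda>w s. (step ^^ s) ([], Call p [x, w]) = ([], Ret 0)"]
      unfolding kleene_T_prog_code_iff by simp
  qed
  then have "X = W (prog_code p)"
    unfolding W_def using f(2) by blast
  then show thesis by (rule that)
qed

lemma npair_eq_imp_le: "npair a b = z \<Longrightarrow> a \<le> z \<and> b \<le> z"
  unfolding npair_def using le_prod_encode_1 le_prod_encode_2 by blast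

lemma nfst_eq_sum: "nfst z = (\<Sum>a<Suc z. if \<exists>b<Suc z. npair a b = z then a else 0)"
proof -
  obtain a0 b0 where "prod_decode z = (a0, b0)"
    by fastforce
  then have z: "z = npair a0 b0"
    by (metis npair_def prod_decode_inverse)
  moreover have "a0 \<le> z" "b0 \<le> z"
    using npair_eq_imp_le[OF z[symmetric]] by simp_all
  ultimately have "(\<exists>b<Suc z. npair a b = z) \<longleftrightarrow> a = a0" for a
    by auto
  then have "(\<Sum>a<Suc z. if \<exists>b<Suc z. npair a b = z then a else 0) = (\<Sum>a<Suc z. if a = a0 then a else 0)"
    by (intro sum.cong) auto
  also have "\<dots> = a0" using \<open>a0 \<le> z\<close> by simp
  finally show ?thesis using z by simp
qed

lemma nsnd_eq_sum: "nsnd z = (\<Sum>b<Suc z. if \<exists>a<Suc z. npair a b = z then b else 0)"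
proof -
  obtain a0 b0 where "prod_decode z = (a0, b0)"
    by fastforce
  then have z: "z = npair a0 b0"
    by (metis npair_def prod_decode_inverse)
  moreover have "a0 \<le> z" "b0 \<le> z"
    using npair_eq_imp_le[OF z[symmetric]] by simp_all
  ultimately have "(\<exists>a<Suc z. npair a b = z) \<longleftrightarrow> b = b0" for b
    by auto
  then have "(\<Sum>b<Suc z. if \<exists>a<Suc z. npair a b = z then b else 0) = (\<Sum>b<Suc z. if b = b0 then b else 0)"
    by (intro sum.cong) auto
  also have "\<dots> = b0" using \<open>b0 \<le> z\<close> by simp
  finally show ?thesis using z by simp
qed

lemma pr_fn_npair: "pr_fn n A \<Longrightarrow> pr_fn n B \<Longrightarrow> pr_fn n (\<lambda>xs. npair (A xs) (B xs))"
  unfolding npair_def prod_encode_def by (auto intro!: pr_fn_add pr_fn_triangle)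

lemma pr_fn_nfst: "pr_fn n A \<Longrightarrow> pr_fn n (\<lambda>xs. nfst (A xs))"
proof -
  have "pr_pred 2 (\<lambda>zs. \<exists>b<Suc (zs ! 1). npair (zs ! 0) b = zs ! 1)"
    by (rule pr_pred_bex[where Q = "\<lambda>ws. npair (ws ! 1) (ws ! 0) = ws ! 2"])
       (auto intro!: pr_pred_eq pr_fn_npair pr_fn_proj pr_fn_Suc)
  then have G: "pr_fn 2 (\<lambda>zs. if \<exists>b<Suc (zs ! 1). npair (zs ! 0) b = zs ! 1 then zs ! 0 else 0)"
    by (rule pr_fn_if) (auto intro: pr_fn_proj pr_fn_const)
  have "pr_fn 1 (\<lambda>zs. \<Sum>a<Suc (zs ! 0). if \<exists>b<Suc (zs ! 0). npair a b = zs ! 0 then a else 0)"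
    by (rule pr_fn_bounded_sum[of 1, OF G[unfolded numeral_2_eq_2 One_nat_def[symmetric]]])
       (auto intro: pr_fn_Suc pr_fn_proj)
  then show "pr_fn n A \<Longrightarrow> pr_fn n (\<lambda>xs. nfst (A xs))"
    unfolding nfst_eq_sum[symmetric] by (rule pr_fn_comp1)
qed

lemma pr_fn_nsnd: "pr_fn n A \<Longrightarrow> pr_fn n (\<lambda>xs. nsnd (A xs))"
proof -
  have "pr_pred 2 (\<lambda>zs. \<exists>a<Suc (zs ! 1). npair a (zs ! 0) = zs ! 1)"
    by (rule pr_pred_bex[where Q = "\<lambda>ws. npair (ws ! 0) (ws ! 1) = ws ! 2"])
       (auto intro!: pr_pred_eq pr_fn_npair pr_fn_proj pr_fn_Suc)
  then have G: "pr_fn 2 (\<lambda>zs. if \<exists>a<Suc (zs ! 1). npair a (zs ! 0) = zs ! 1 then zs ! 0 else 0)"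
    by (rule pr_fn_if) (auto intro: pr_fn_proj pr_fn_const)
  have "pr_fn 1 (\<lambda>zs. \<Sum>b<Suc (zs ! 0). if \<exists>a<Suc (zs ! 0). npair a b = zs ! 0 then b else 0)"
    by (rule pr_fn_bounded_sum[of 1, OF G[unfolded numeral_2_eq_2 One_nat_def[symmetric]]])
       (auto intro: pr_fn_Suc pr_fn_proj)
  then show "pr_fn n A \<Longrightarrow> pr_fn n (\<lambda>xs. nsnd (A xs))"
    unfolding nsnd_eq_sum[symmetric] by (rule pr_fn_comp1)
qed

lemma pr_fn_ncons: "pr_fn n A \<Longrightarrow> pr_fn n B \<Longrightarrow> pr_fn n (\<lambda>xs. ncons (A xs) (B xs))"
  unfolding ncons_def by (intro pr_fn_Suc pr_fn_npair)

lemma pr_fn_nhd: "pr_fn n A \<Longrightarrow> pr_fn n (\<lambda>xs. nhd (A xs))"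
  unfolding nhd_def by (intro pr_fn_nfst pr_fn_diff pr_fn_const)

lemma pr_fn_ntl: "pr_fn n A \<Longrightarrow> pr_fn n (\<lambda>xs. ntl (A xs))"
  unfolding ntl_def by (intro pr_fn_nsnd pr_fn_diff pr_fn_const)

lemma pr_fn_nnth: "pr_fn n A \<Longrightarrow> pr_fn n B \<Longrightarrow> pr_fn n (\<lambda>xs. nnth (A xs) (B xs))"
proof -
  assume A: "pr_fn n A" and B: "pr_fn n B"
  have "pr_fn n (\<lambda>xs. nhd (rec_nat (A xs) (\<lambda>y r. ntl r) (B xs)))"
    by (intro pr_fn_nhd pr_fn_rec_param[OF A _ B] pr_fn_ntl pr_fn_proj) simp
  moreover have "rec_nat l (\<lambda>y r. ntl r) k = (ntl ^^ k) l" for l k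
    by (induction k) auto
  ultimately show ?thesis by (simp add: nnth_def)
qed

lemmas pr_fn_code_intros = pr_fn_if pr_pred_eq pr_fn_npair pr_fn_nfst pr_fn_nsnd pr_fn_ncons
  pr_fn_nhd pr_fn_ntl pr_fn_nnth pr_fn_Suc pr_fn_diff pr_fn_proj pr_fn_const

lemma pr_fn_step_code: "pr_fn n A \<Longrightarrow> pr_fn n (\<lambda>xs. step_code (A xs))"
proof -
  have "pr_fn 1 (\<lambda>zs. step_code (zs ! 0))"
    unfolding step_code_def Let_def by (intro pr_fn_code_intros) simp_all
  then show "pr_fn n A \<Longrightarrow> pr_fn n (\<lambda>xs. step_code (A xs))" by (rule pr_fn_comp1)
qed

lemma pr_fn_kleene_T: "pr_fn n A \<Longrightarrow> pr_fn n B \<Longrightarrow> pr_fn n C \<Longrightarrow> pr_fn n (\<lambda>xs. kleene_T (A xs) (B xs) (C xs))"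
proof -
  have "pr_fn 3 (\<lambda>zs. if rec_nat (npair 0 (npair 0 (npair (zs ! 0) (ncons (zs ! 1) (ncons (nfst (zs ! 2)) 0)))))
                            (\<lambda>y r. step_code r) (nsnd (zs ! 2)) = npair 0 (npair 1 0) then 0 else 1)"
    by (intro pr_fn_code_intros pr_fn_rec_param pr_fn_step_code) simp_all
  moreover have "rec_nat l (\<lambda>y r. step_code r) k = (step_code ^^ k) l" for l k
    by (induction k) auto
  ultimately have "pr_fn 3 (\<lambda>zs. kleene_T (zs ! 0) (zs ! 1) (zs ! 2))" by (simp add: kleene_T_def)
  then show "pr_fn n A \<Longrightarrow> pr_fn n B \<Longrightarrow> pr_fn n C \<Longrightarrow> pr_fn n (\<lambda>xs. kleene_T (A xs) (B xs) (C xs))"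
    by (rule pr_fn_comp3)
qed

section \<open>Dyadic slices and densities\<close>

definition slice :: "nat \<Rightarrow> nat set" where
  "slice e = {z. 2 ^ e dvd Suc z \<and> \<not> 2 ^ Suc e dvd Suc z}"

definition slice_tail :: "nat \<Rightarrow> nat set" where
  "slice_tail N = {z. 2 ^ N dvd Suc z}"

definition count_below :: "nat set \<Rightarrow> nat \<Rightarrow> nat" where
  "count_below X n = card (X \<inter> {..<n})"

lemma rho_eq_count_below: "rho X n = real (count_below X n) / real n"
  unfolding rho_def count_below_def by simp

lemma power2_dvd_Suc_imp_le: "2 ^ k dvd Suc z \<Longrightarrow> k \<le> z"
proof -
  assume "2 ^ k dvd Suc z"
  then have "2 ^ k \<le> Suc z" by (auto intro: dvd_imp_le)
  moreover have "k < 2 ^ k" by (rule less_exp)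
  ultimately show ?thesis by linarith
qed

lemma slice_imp_le: "z \<in> slice e \<Longrightarrow> e \<le> z"
  unfolding slice_def using power2_dvd_Suc_imp_le by blast

lemma slice_unique_aux:
  assumes "z \<in> slice e" "z \<in> slice e'"
  shows "\<not> e < e'"
proof
  assume "e < e'"
  then have "(2::nat) ^ Suc e dvd 2 ^ e'" by (intro le_imp_power_dvd) simp
  moreover have "2 ^ e' dvd Suc z" using assms(2) unfolding slice_def by simp
  ultimately have "2 ^ Suc e dvd Suc z" by (rule dvd_trans)
  then show False using assms(1) unfolding slice_def by simp
qed

lemma slice_unique:
  assumes "z \<in> slice e" "z \<in> slice e'"
  shows "e = e'"
  using slice_unique_aux[OF assms] slice_unique_aux[OF assms(2,1)] by simp

lemma ex_slice: "\<exists>e. z \<in> slice e"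
proof -
  let ?P = "\<lambda>k. (2::nat) ^ k dvd Suc z"
  let ?G = "Greatest ?P"
  have "?P ?G" by (rule GreatestI_nat[of ?P 0 z]) (auto intro: power2_dvd_Suc_imp_le)
  moreover have "\<not> ?P (Suc ?G)"
  proof
    assume "?P (Suc ?G)"
    then have "Suc ?G \<le> ?G" by (rule Greatest_le_nat[of ?P _ z]) (auto intro: power2_dvd_Suc_imp_le)
    then show False by simp
  qed
  ultimately show ?thesis unfolding slice_def by blast
qed

lemma slice_tail_iff: "z \<in> slice_tail N \<longleftrightarrow> (\<exists>e\<ge>N. z \<in> slice e)"
proof
  assume zT: "z \<in> slice_tail N"
  obtain e where e: "z \<in> slice e" using ex_slice by blast
  have "N \<le> e"
  proof (rule ccontr)
    assume "\<not> N \<le> e"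
    then have "(2::nat) ^ Suc e dvd 2 ^ N" by (intro le_imp_power_dvd) simp
    then have "2 ^ Suc e dvd Suc z" using zT unfolding slice_tail_def by (auto intro: dvd_trans)
    then show False using e unfolding slice_def by simp
  qed
  then show "\<exists>e\<ge>N. z \<in> slice e" using e by blast
next
  assume "\<exists>e\<ge>N. z \<in> slice e"
  then obtain e where "N \<le> e" "2 ^ e dvd Suc z" unfolding slice_def by blast
  moreover have "(2::nat) ^ N dvd 2 ^ e" using \<open>N \<le> e\<close> by (rule le_imp_power_dvd)
  ultimately show "z \<in> slice_tail N" unfolding slice_tail_def using dvd_trans by blast
qed

lemma card_dvd_Suc_below: "(d::nat) > 0 \<Longrightarrow> card {z. z < n \<and> d dvd Suc z} = n div d"
proof (induction n)
  case 0
  then show ?case by simp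
next
  case (Suc n)
  have fin: "finite {z. z < n \<and> d dvd Suc z}" by simp
  show ?case
  proof (cases "d dvd Suc n")
    case True
    then have "{z. z < Suc n \<and> d dvd Suc z} = insert n {z. z < n \<and> d dvd Suc z}"
      by (auto simp: less_Suc_eq)
    moreover have "Suc n div d = Suc (n div d)"
      using True by (simp add: div_Suc dvd_eq_mod_eq_0)
    ultimately show ?thesis using Suc fin by simp
  next
    case False
    then have "{z. z < Suc n \<and> d dvd Suc z} = {z. z < n \<and> d dvd Suc z}"
      by (auto simp: less_Suc_eq)
    moreover have "Suc n div d = n div d"
      using False by (simp add: div_Suc dvd_eq_mod_eq_0)
    ultimately show ?thesis using Suc by simp
  qed
qed

lemma count_below_slice_tail: "count_below (slice_tail N) n = n div 2 ^ N"
proof -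
  have "slice_tail N \<inter> {..<n} = {z. z < n \<and> 2 ^ N dvd Suc z}" unfolding slice_tail_def by auto
  then show ?thesis unfolding count_below_def using card_dvd_Suc_below[of "2 ^ N" n] by simp
qed

lemma count_below_slice: "count_below (slice e) n = n div 2 ^ e - n div 2 ^ Suc e"
proof -
  have "slice_tail (Suc e) \<subseteq> slice_tail e"
    unfolding slice_tail_def by (auto intro: dvd_trans[rotated] simp: le_imp_power_dvd)
  moreover have "slice e = slice_tail e - slice_tail (Suc e)"
    unfolding slice_def slice_tail_def by auto
  ultimately have "slice e \<inter> {..<n} = (slice_tail e \<inter> {..<n}) - (slice_tail (Suc e) \<inter> {..<n})"
    and "slice_tail (Suc e) \<inter> {..<n} \<subseteq> slice_tail e \<inter> {..<n}"
    by blast+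
  then show ?thesis using count_below_slice_tail[of e n] count_below_slice_tail[of "Suc e" n]
    unfolding count_below_def by (simp add: card_Diff_subset del: power_Suc)
qed

lemma nat_div_bounds:
  assumes "(d::nat) > 0"
  shows "real n / d - 1 < real (n div d)" "real (n div d) \<le> real n / d"
proof -
  have e: "real (n div d) = of_int \<lfloor>real n / real d\<rfloor>"
    by (metis floor_divide_of_nat_eq of_int_of_nat_eq)
  show "real n / d - 1 < real (n div d)" "real (n div d) \<le> real n / d"
    unfolding e by linarith+
qed

lemma count_below_slice_approx: "\<bar>real (count_below (slice e) n) - real n / 2 ^ Suc e\<bar> \<le> 1"
proof -
  define a where "a = real n / 2 ^ Suc e"
  define x where "x = real (n div 2 ^ e)"
  define y where "y = real (n div 2 ^ Suc e)"
  have "n div 2 ^ Suc e \<le> n div 2 ^ e"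
    by (simp add: div_le_mono2)
  then have c: "real (count_below (slice e) n) = x - y"
    unfolding count_below_slice x_def y_def by (simp add: of_nat_diff del: power_Suc)
  have "real n / 2 ^ e - 1 < x" "x \<le> real n / 2 ^ e"
    using nat_div_bounds[of "2 ^ e" n] unfolding x_def by simp_all
  moreover have "a - 1 < y" "y \<le> a"
    using nat_div_bounds[of "2 ^ Suc e" n] unfolding a_def y_def by (simp_all del: power_Suc)
  moreover have "real n / 2 ^ e = 2 * a" unfolding a_def by simp
  ultimately show ?thesis unfolding c a_def[symmetric] by linarith
qed

lemma count_below_split_slices:
  "count_below X n = (\<Sum>e<N. count_below (X \<inter> slice e) n) + count_below (X \<inter> slice_tail N) n"
proof -
  have split: "X \<inter> {..<n} = (\<Union>e<N. X \<inter> slice e \<inter> {..<n}) \<union> (X \<inter> slice_tail N \<inter> {..<n})"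
  proof (intro equalityI subsetI)
    fix z assume z: "z \<in> X \<inter> {..<n}"
    obtain e where e: "z \<in> slice e" using ex_slice by blast
    show "z \<in> (\<Union>e<N. X \<inter> slice e \<inter> {..<n}) \<union> (X \<inter> slice_tail N \<inter> {..<n})"
    proof (cases "e < N")
      case True
      then show ?thesis using z e by blast
    next
      case False
      then have "z \<in> slice_tail N" using slice_tail_iff e by (meson not_less)
      then show ?thesis using z by blast
    qed
  qed blast
  have "(\<Union>e<N. X \<inter> slice e \<inter> {..<n}) \<inter> (X \<inter> slice_tail N \<inter> {..<n}) = {}"
  proof (rule ccontr)
    assume "\<not> ?thesis"
    then obtain z e where "e < N" "z \<in> slice e" "z \<in> slice_tail N" by blast
    moreover obtain e' where "e' \<ge> N" "z \<in> slice e'" using slice_tail_iff \<open>z \<in> slice_tail N\<close> by blast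
    ultimately show False using slice_unique[of z e e'] by simp
  qed
  then have card_split: "card (X \<inter> {..<n}) = card (\<Union>e<N. X \<inter> slice e \<inter> {..<n}) + card (X \<inter> slice_tail N \<inter> {..<n})"
    unfolding split by (intro card_Un_disjoint) simp_all
  have "\<forall>i\<in>{..<N}. \<forall>j\<in>{..<N}. i \<noteq> j \<longrightarrow> (X \<inter> slice i \<inter> {..<n}) \<inter> (X \<inter> slice j \<inter> {..<n}) = {}"
    using slice_unique by blast
  then have "card (\<Union>e<N. X \<inter> slice e \<inter> {..<n}) = (\<Sum>e<N. card (X \<inter> slice e \<inter> {..<n}))"
    by (intro card_UN_disjoint) simp_all
  then show ?thesis unfolding count_below_def card_split by simp
qed

lemma convergent_if_approximable:
  fixes a :: "nat \<Rightarrow> real"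
  assumes "\<And>\<epsilon>. \<epsilon> > 0 \<Longrightarrow> \<exists>L. \<forall>\<^sub>F n in sequentially. \<bar>a n - L\<bar> < \<epsilon>"
  shows "convergent a"
proof -
  have "Cauchy a"
  proof (rule metric_CauchyI)
    fix \<epsilon> :: real
    assume "\<epsilon> > 0"
    then obtain L M where "\<And>n. n \<ge> M \<Longrightarrow> \<bar>a n - L\<bar> < \<epsilon> / 2"
      using assms[of "\<epsilon> / 2"] unfolding eventually_sequentially by auto
    then have "\<forall>m\<ge>M. \<forall>n\<ge>M. dist (a m) (a n) < \<epsilon>"
      unfolding dist_real_def by (smt (verit, best) field_sum_of_halves)
    then show "\<exists>M. \<forall>m\<ge>M. \<forall>n\<ge>M. dist (a m) (a n) < \<epsilon>" ..
  qed
  then show ?thesis by (simp add: Cauchy_convergent_iff)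
qed

lemma count_below_slicewise_estimate:
  assumes "\<And>e. slice e \<subseteq> X \<or> finite (X \<inter> slice e)"
  shows "\<bar>real (count_below X n) - real n * (\<Sum>e<N. if slice e \<subseteq> X then 1 / 2 ^ Suc e else 0)\<bar>
           \<le> (\<Sum>e<N. 1 + real (card (X \<inter> slice e))) + real n / 2 ^ N"
proof -
  define c where "c e = real (count_below (X \<inter> slice e) n) - real n * (if slice e \<subseteq> X then 1 / 2 ^ Suc e else 0)" for e
  define t where "t = real (count_below (X \<inter> slice_tail N) n)"
  have "\<bar>c e\<bar> \<le> 1 + real (card (X \<inter> slice e))" for e
  proof (cases "slice e \<subseteq> X")
    case True
    then have "X \<inter> slice e = slice e" by blast
    then show ?thesis using True count_below_slice_approx[of e n] unfolding c_def by simp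
  next
    case False
    then have "count_below (X \<inter> slice e) n \<le> card (X \<inter> slice e)"
      using assms[of e] unfolding count_below_def by (intro card_mono) auto
    then show ?thesis using False unfolding c_def by simp
  qed
  then have "(\<Sum>e<N. \<bar>c e\<bar>) \<le> (\<Sum>e<N. 1 + real (card (X \<inter> slice e)))"
    by (rule sum_mono)
  then have "\<bar>\<Sum>e<N. c e\<bar> \<le> (\<Sum>e<N. 1 + real (card (X \<inter> slice e)))"
    using sum_abs[of c "{..<N}"] by linarith
  moreover have "count_below (X \<inter> slice_tail N) n \<le> count_below (slice_tail N) n"
    unfolding count_below_def by (intro card_mono) auto
  then have "0 \<le> t" "t \<le> real n / 2 ^ N"
    using nat_div_bounds(2)[of "2 ^ N" n] unfolding t_def count_below_slice_tail by simp_all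
  moreover have "real (count_below X n) - real n * (\<Sum>e<N. if slice e \<subseteq> X then 1 / 2 ^ Suc e else 0)
                   = (\<Sum>e<N. c e) + t"
    unfolding c_def t_def count_below_split_slices[of X n N]
    by (simp add: sum_subtractf sum_distrib_left)
  ultimately show ?thesis by linarith
qed

lemma has_density_if_slicewise:
  assumes "\<And>e. slice e \<subseteq> X \<or> finite (X \<inter> slice e)"
  shows "has_density X"
proof -
  have "\<exists>L. \<forall>\<^sub>F n in sequentially. \<bar>rho X (Suc n) - L\<bar> < \<epsilon>" if "\<epsilon> > 0" for \<epsilon>
  proof -
    obtain N where N: "1 / 2 ^ N < \<epsilon> / 2"
      using real_arch_pow_inv[of "\<epsilon> / 2" "1 / 2"] \<open>\<epsilon> > 0\<close> by (auto simp: power_one_over)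
    define L where "L = (\<Sum>e<N. if slice e \<subseteq> X then 1 / 2 ^ Suc e else 0 :: real)"
    define K where "K = (\<Sum>e<N. 1 + real (card (X \<inter> slice e)))"
    have bound: "\<bar>rho X (Suc n) - L\<bar> \<le> K / real (Suc n) + 1 / 2 ^ N" for n
    proof -
      have "\<bar>rho X (Suc n) - L\<bar> = \<bar>real (count_below X (Suc n)) - real (Suc n) * L\<bar> / real (Suc n)"
        unfolding rho_eq_count_below by (simp add: field_simps abs_divide)
      also have "\<dots> \<le> (K + real (Suc n) / 2 ^ N) / real (Suc n)"
        unfolding K_def L_def by (rule divide_right_mono[OF count_below_slicewise_estimate[OF assms]]) simp
      also have "\<dots> = K / real (Suc n) + 1 / 2 ^ N" by (simp add: field_simps)
      finally show ?thesis .
    qed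
    have "(\<lambda>n. K / real (Suc n)) \<longlonglongrightarrow> 0"
      by (rule LIMSEQ_Suc[OF lim_const_over_n])
    then have "\<forall>\<^sub>F n in sequentially. K / real (Suc n) < \<epsilon> / 2"
      by (rule order_tendstoD(2)) (use \<open>\<epsilon> > 0\<close> in simp)
    then have "\<forall>\<^sub>F n in sequentially. \<bar>rho X (Suc n) - L\<bar> < \<epsilon>"
    proof (rule eventually_mono)
      fix n
      assume "K / real (Suc n) < \<epsilon> / 2"
      then show "\<bar>rho X (Suc n) - L\<bar> < \<epsilon>" using bound[of n] N by linarith
    qed
    then show ?thesis ..
  qed
  then have "convergent (\<lambda>n. rho X (Suc n))"
    by (rule convergent_if_approximable)
  then show ?thesis unfolding has_density_def convergent_def .
qed

lemma lower_density_mono: "X \<subseteq> Y \<Longrightarrow> lower_density X \<le> lower_density Y"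
  unfolding lower_density_def rho_def
  by (intro Liminf_mono always_eventually allI ereal_less_eq(3)[THEN iffD2] divide_right_mono
      of_nat_mono card_mono) auto

lemma lower_density_slice_pos: "lower_density (slice e) > 0"
proof -
  let ?c = "1 / 2 ^ Suc (Suc e) :: real"
  have "?c \<le> rho (slice e) (Suc n)" if n: "2 ^ Suc (Suc e) \<le> n" for n
  proof -
    have "real (Suc n) / 2 ^ Suc e - 1 \<le> real (count_below (slice e) (Suc n))"
      using count_below_slice_approx[of e "Suc n"] by linarith
    then have "(real (Suc n) / 2 ^ Suc e - 1) / real (Suc n) \<le> rho (slice e) (Suc n)"
      unfolding rho_eq_count_below by (rule divide_right_mono) simp
    moreover have "(real (Suc n) / 2 ^ Suc e - 1) / real (Suc n) = 1 / 2 ^ Suc e - 1 / real (Suc n)"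
      by (simp add: field_simps)
    moreover have "(2::real) ^ Suc (Suc e) \<le> real (Suc n)"
      using n by (metis le_SucI of_nat_le_iff of_nat_numeral of_nat_power)
    then have "1 / real (Suc n) \<le> ?c" by (simp add: frac_le del: power_Suc)
    ultimately show ?thesis by simp
  qed
  then have "\<forall>\<^sub>F n in sequentially. ereal ?c \<le> ereal (rho (slice e) (Suc n))"
    unfolding eventually_sequentially by auto
  then have "ereal ?c \<le> lower_density (slice e)"
    unfolding lower_density_def by (rule Liminf_bounded)
  then show ?thesis by (rule less_le_trans[rotated]) simp
qed

section \<open>The construction\<close>

definition diag_set :: "nat set" where
  "diag_set = {x. \<exists>e. x \<in> slice e \<and> (\<forall>y\<le>x. y \<in> slice e \<longrightarrow> y \<in> W e)}"

lemma slice_subset_diag_set: "slice e \<subseteq> W e \<Longrightarrow> slice e \<subseteq> diag_set"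
  unfolding diag_set_def by blast

lemma diag_set_slice_finite:
  assumes "\<not> slice e \<subseteq> W e"
  shows "finite (diag_set \<inter> slice e)"
proof -
  obtain z where z: "z \<in> slice e" "z \<notin> W e" using assms by blast
  have "diag_set \<inter> slice e \<subseteq> {..<z}"
  proof
    fix x
    assume x: "x \<in> diag_set \<inter> slice e"
    then obtain e' where "x \<in> slice e'" "\<forall>y\<le>x. y \<in> slice e' \<longrightarrow> y \<in> W e'"
      unfolding diag_set_def by blast
    moreover have "e' = e" using x \<open>x \<in> slice e'\<close> slice_unique by blast
    ultimately show "x \<in> {..<z}" using z by (auto simp: not_less[symmetric])
  qed
  then show ?thesis by (rule finite_subset) simp
qed

lemma has_density_diag_set: "has_density diag_set"
  using slice_subset_diag_set diag_set_slice_finite by (blast intro: has_density_if_slicewise)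

lemma slice_subset_W_if_co_W_subset:
  assumes "- W e \<subseteq> diag_set"
  shows "slice e \<subseteq> W e"
proof
  fix z
  assume z: "z \<in> slice e"
  show "z \<in> W e"
  proof (rule ccontr)
    assume "z \<notin> W e"
    then obtain e' where "z \<in> slice e'" "\<forall>y\<le>z. y \<in> slice e' \<longrightarrow> y \<in> W e'"
      using assms unfolding diag_set_def by blast
    moreover have "e' = e" using z \<open>z \<in> slice e'\<close> slice_unique by blast
    ultimately show False using z \<open>z \<notin> W e\<close> by blast
  qed
qed

lemma finite_choice_bound:
  fixes n :: nat and R :: "nat \<Rightarrow> nat \<Rightarrow> bool"
  shows "(\<forall>y<n. Q y \<longrightarrow> (\<exists>w. R y w)) \<Longrightarrow> \<exists>t. \<forall>y<n. Q y \<longrightarrow> (\<exists>w<t. R y w)"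
proof (induction n)
  case 0
  then show ?case by auto
next
  case (Suc n)
  then obtain t where t: "\<forall>y<n. Q y \<longrightarrow> (\<exists>w<t. R y w)" by auto
  show ?case
  proof (cases "Q n")
    case True
    then obtain w0 where "R n w0" using Suc.prems by auto
    then show ?thesis using t
      by (intro exI[of _ "max t (Suc w0)"]) (auto simp: less_Suc_eq less_max_iff_disj)
  next
    case False
    then show ?thesis using t by (intro exI[of _ t]) (auto simp: less_Suc_eq)
  qed
qed

lemma diag_set_iff_bounded:
  "x \<in> diag_set \<longleftrightarrow>
     (\<exists>t. \<exists>e<Suc x. x \<in> slice e \<and> (\<forall>y<Suc x. y \<in> slice e \<longrightarrow> (\<exists>w<t. kleene_T e y w = 0)))"
proof
  assume "x \<in> diag_set"
  then obtain e where e: "x \<in> slice e" "\<forall>y<Suc x. y \<in> slice e \<longrightarrow> (\<exists>w. kleene_T e y w = 0)"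
    unfolding diag_set_def W_def by (auto simp: less_Suc_eq_le)
  moreover obtain t where "\<forall>y<Suc x. y \<in> slice e \<longrightarrow> (\<exists>w<t. kleene_T e y w = 0)"
    using finite_choice_bound[OF e(2)] ..
  moreover have "e < Suc x" using slice_imp_le[OF e(1)] by simp
  ultimately show "\<exists>t. \<exists>e<Suc x. x \<in> slice e \<and> (\<forall>y<Suc x. y \<in> slice e \<longrightarrow> (\<exists>w<t. kleene_T e y w = 0))"
    by blast
next
  assume "\<exists>t. \<exists>e<Suc x. x \<in> slice e \<and> (\<forall>y<Suc x. y \<in> slice e \<longrightarrow> (\<exists>w<t. kleene_T e y w = 0))"
  then obtain t e where "x \<in> slice e" "\<And>y. y \<le> x \<Longrightarrow> y \<in> slice e \<Longrightarrow> \<exists>w<t. kleene_T e y w = 0"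
    by (auto simp: less_Suc_eq_le)
  then show "x \<in> diag_set"
    unfolding diag_set_def W_def by blast
qed

lemma dvd_iff_ex_mult_below: "(d::nat) > 0 \<Longrightarrow> d dvd m \<longleftrightarrow> (\<exists>q<Suc m. q * d = m)"
proof
  assume "d > 0" "d dvd m"
  then obtain q where "m = d * q" by blast
  moreover have "q \<le> d * q" using \<open>d > 0\<close> by simp
  ultimately show "\<exists>q<Suc m. q * d = m" by (metis le_imp_less_Suc mult.commute)
next
  assume "\<exists>q<Suc m. q * d = m"
  then show "d dvd m" by (metis dvd_triv_right)
qed

lemma pr_pred_in_slice: "pr_fn n A \<Longrightarrow> pr_fn n B \<Longrightarrow> pr_pred n (\<lambda>xs. B xs \<in> slice (A xs))"
proof -
  have "pr_pred 2 (\<lambda>zs. \<exists>q<Suc (Suc (zs ! 1)). q * 2 ^ (zs ! 0) = Suc (zs ! 1))"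
    by (rule pr_pred_bex[where Q = "\<lambda>ws. ws ! 0 * 2 ^ (ws ! 1) = Suc (ws ! 2)"])
       (auto intro!: pr_pred_eq pr_fn_mult pr_fn_power2 pr_fn_proj pr_fn_Suc simp: length_eq_2_iff)
  moreover have "pr_pred 2 (\<lambda>zs. \<exists>q<Suc (Suc (zs ! 1)). q * 2 ^ Suc (zs ! 0) = Suc (zs ! 1))"
    by (rule pr_pred_bex[where Q = "\<lambda>ws. ws ! 0 * 2 ^ Suc (ws ! 1) = Suc (ws ! 2)"])
       (auto intro!: pr_pred_eq pr_fn_mult pr_fn_power2 pr_fn_proj pr_fn_Suc
         simp: length_eq_2_iff simp del: power_Suc)
  ultimately have "pr_pred 2 (\<lambda>zs. (\<exists>q<Suc (Suc (zs ! 1)). q * 2 ^ (zs ! 0) = Suc (zs ! 1)) \<and>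
      \<not> (\<exists>q<Suc (Suc (zs ! 1)). q * 2 ^ Suc (zs ! 0) = Suc (zs ! 1)))"
    by (rule pr_pred_conj[OF _ pr_pred_not])
  then have "pr_pred 2 (\<lambda>zs. zs ! 1 \<in> slice (zs ! 0))"
    unfolding pr_pred_def
    by (rule pr_fn_cong) (simp add: slice_def dvd_iff_ex_mult_below del: power_Suc)
  then show "pr_fn n A \<Longrightarrow> pr_fn n B \<Longrightarrow> pr_pred n (\<lambda>xs. B xs \<in> slice (A xs))"
    by (rule pr_pred_comp2)
qed

lemma ce_diag_set: "ce diag_set"
proof -
  have "pr_pred (Suc 3) (\<lambda>vs. \<exists>w<vs ! 3. kleene_T (vs ! 1) (vs ! 0) w = 0)"
    by (rule pr_pred_bex[where Q = "\<lambda>ws. kleene_T (ws ! 2) (ws ! 1) (ws ! 0) = 0"])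
       (auto intro!: pr_pred_eq pr_fn_kleene_T pr_fn_proj pr_fn_const)
  then have "pr_pred (Suc 3) (\<lambda>vs. vs ! 0 \<in> slice (vs ! 1) \<longrightarrow> (\<exists>w<vs ! 3. kleene_T (vs ! 1) (vs ! 0) w = 0))"
    by (intro pr_pred_imp pr_pred_in_slice pr_fn_proj) simp_all
  then have "pr_pred 3 (\<lambda>us. \<forall>y<Suc (us ! 1). y \<in> slice (us ! 0) \<longrightarrow> (\<exists>w<us ! 2. kleene_T (us ! 0) y w = 0))"
    by (rule pr_pred_ball) (auto intro!: pr_fn_proj pr_fn_Suc)
  then have "pr_pred (Suc 2) (\<lambda>us. us ! 1 \<in> slice (us ! 0) \<and>
      (\<forall>y<Suc (us ! 1). y \<in> slice (us ! 0) \<longrightarrow> (\<exists>w<us ! 2. kleene_T (us ! 0) y w = 0)))"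
    by (intro pr_pred_conj pr_pred_in_slice pr_fn_proj) simp_all
  then have "pr_pred 2 (\<lambda>zs. \<exists>e<Suc (zs ! 0). zs ! 0 \<in> slice e \<and>
               (\<forall>y<Suc (zs ! 0). y \<in> slice e \<longrightarrow> (\<exists>w<zs ! 1. kleene_T e y w = 0)))"
    by (rule pr_pred_bex) (auto intro!: pr_fn_proj pr_fn_Suc simp: length_eq_2_iff)
  then obtain f where "PR 2 f"
    and f: "\<And>xs. length xs = 2 \<Longrightarrow> f xs = (if \<exists>e<Suc (xs ! 0). xs ! 0 \<in> slice e \<and>
               (\<forall>y<Suc (xs ! 0). y \<in> slice e \<longrightarrow> (\<exists>w<xs ! 1. kleene_T e y w = 0)) then 0 else 1)"
    unfolding pr_pred_def pr_fn_def by blast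
  have "x \<in> diag_set \<longleftrightarrow> (\<exists>t. f [x, t] = 0)" for x
    unfolding diag_set_iff_bounded using f[of "[x, _]"] by simp blast
  then show ?thesis unfolding ce_def using \<open>PR 2 f\<close> by blast
qed

theorem mainTheorem10:
  shows "\<exists>A. ce A \<and> has_density A \<and>
           (\<forall>B. Pi01 B \<and> B \<subseteq> A \<longrightarrow> lower_density (A - B) > 0 \<and> dens_dist A B > 0)"
proof (intro exI conjI allI impI)
  show "ce diag_set" by (rule ce_diag_set)
  show "has_density diag_set" by (rule has_density_diag_set)
  fix B
  assume B: "Pi01 B \<and> B \<subseteq> diag_set"
  then have "ce (- B)" unfolding Pi01_def by blast
  then obtain e where e: "- B = W e" by (rule ce_obtain_index)
  then have "slice e \<subseteq> W e"
    using B by (intro slice_subset_W_if_co_W_subset) auto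
  then have "slice e \<subseteq> diag_set - B"
    using slice_subset_diag_set e by blast
  then have "lower_density (slice e) \<le> lower_density (diag_set - B)"
    by (rule lower_density_mono)
  then have pos: "lower_density (diag_set - B) > 0"
    by (rule less_le_trans[OF lower_density_slice_pos])
  then show "lower_density (diag_set - B) > 0" .
  have "lower_density (diag_set - B) \<le> dens_dist diag_set B"
    unfolding dens_dist_def by (rule lower_density_mono) blast
  then show "dens_dist diag_set B > 0" using pos by simp
qed

end
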